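(* Let $n=4$, let $A$ be an irreducible $4\times 4$ Dickson matrix over $\mathbb{F}_{q^4}$ and let $B$ be a $4\times4$ Dickson matrix such that $A$ and $B$ have equal corresponding principal minors. Then $B$ is diagonally similar to $A$ or to $A^T$.
   Context: A Dickson matrix is the $n\times n$ matrix indexed by $\mathbb{Z}_n$ with $A[i|j]=a_{j-i}^{q^i}$ (indices mod $n$) associated to a $q$-polynomial $\sum_{j=0}^{n-1}a_jx^{q^j}\in\mathbb{F}_{q^n}[x]$. $A$ is reducible if there is a partition $\{\alpha,\beta\}$ of $\mathbb{Z}_n$ into nonempty sets with $A[\alpha|\beta]=0$ (rows $\alpha$, columns $\beta$), irreducible otherwise. Equal corresponding principal minors: $\det A[\alpha|\alpha]=\det B[\alpha|\alpha]$ for all nonempty $\alpha$. Diagonally similar: $B=D^{-1}AD$ with $D$ invertible diagonal. *)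

theory Defs
  imports "Jordan_Normal_Form.Determinant" "Jordan_Normal_Form.DL_Submatrix"
begin

text \<open>Dickson matrix of the q-polynomial sum_{j<n} a_j x^(q^j), indexed by Z_n = {0..<n}:
  entry (i,j) is a_{(j-i) mod n}^(q^i).\<close>
definition dickson_mat :: "nat \<Rightarrow> nat \<Rightarrow> (nat \<Rightarrow> 'a::field) \<Rightarrow> 'a mat" where
  "dickson_mat q n a = mat n n (\<lambda>(i,j). (a ((j + n - i) mod n)) ^ (q ^ i))"

definition is_dickson_mat :: "nat \<Rightarrow> nat \<Rightarrow> 'a::field mat \<Rightarrow> bool" where
  "is_dickson_mat q n A \<longleftrightarrow> (\<exists>a. A = dickson_mat q n a)"

definition reducible_mat :: "nat \<Rightarrow> 'a::zero mat \<Rightarrow> bool" where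
  "reducible_mat n A \<longleftrightarrow> (\<exists>\<alpha> \<beta>. \<alpha> \<union> \<beta> = {0..<n} \<and> \<alpha> \<inter> \<beta> = {} \<and> \<alpha> \<noteq> {} \<and> \<beta> \<noteq> {}
      \<and> (\<forall>i\<in>\<alpha>. \<forall>j\<in>\<beta>. A $$ (i,j) = 0))"

definition irreducible_mat :: "nat \<Rightarrow> 'a::zero mat \<Rightarrow> bool" where
  "irreducible_mat n A \<longleftrightarrow> \<not> reducible_mat n A"

definition equal_principal_minors :: "nat \<Rightarrow> 'a::comm_ring_1 mat \<Rightarrow> 'a mat \<Rightarrow> bool" where
  "equal_principal_minors n A B \<longleftrightarrow>
     (\<forall>\<alpha>. \<alpha> \<subseteq> {0..<n} \<and> \<alpha> \<noteq> {} \<longrightarrow> det (submatrix A \<alpha> \<alpha>) = det (submatrix B \<alpha> \<alpha>))"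

definition diag_similar :: "nat \<Rightarrow> 'a::field mat \<Rightarrow> 'a mat \<Rightarrow> bool" where
  "diag_similar n B A \<longleftrightarrow> (\<exists>D Di. D \<in> carrier_mat n n \<and> Di \<in> carrier_mat n n \<and> diagonal_mat D
      \<and> inverts_mat D Di \<and> inverts_mat Di D \<and> B = Di * A * D)"

end

theory Submission
  imports Defs
begin

text \<open>
  Write \<sigma> x = x ^ q, a multiplicative map of order 4 on the field with q^4 elements; the
  Dickson matrix of a has entries \<sigma>^i (a (j - i)). Its principal minors on {0}, {0,1}, {0,2},
  {0,1,2} and its determinant determine a0, the products a1 \<sigma>(a3) and a2 \<sigma>^2(a2), and the sum
  X + Z of X = a1 \<sigma>(a1) \<sigma>^2(a2) and Z = a2 \<sigma>(a3) \<sigma>^2(a3) (replaced by N(a1) + N(a3)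
  when a2 = 0). The product X Z is a function of the first two, so the pair {X, Z} is shared by
  A and B. Transposition exchanges X and Z, so after possibly replacing A by its transpose, X
  agrees; as irreducibility forces a1 \<noteq> 0 or a3 \<noteq> 0, this yields r of norm 1 with
  b_k = a_k r \<sigma>(r) ... \<sigma>^(k-1)(r). By Hilbert 90, r = \<sigma>(d) / d, and then B = D^-1 A D
  for D = diag(d, \<sigma> d, \<sigma>^2 d, \<sigma>^3 d).
\<close>

section \<open>Finite fields\<close>

lemma finite_field_pow_card:
  fixes x :: "'a::{finite,field}"
  shows "x ^ card (UNIV :: 'a set) = x"
proof (cases "x = 0")
  case False
  have "x * (\<Prod>y\<in>UNIV-{0}. x * y) = x * x ^ (card (UNIV :: 'a set) - 1) * \<Prod>(UNIV-{0})"
    by (simp add: prod.distrib mult_ac)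
  also have "x * x ^ (card (UNIV :: 'a set) - 1) = x ^ card (UNIV :: 'a set)"
    using finite_UNIV_card_ge_0[where ?'a = 'a] by (simp flip: power_Suc)
  also have "(\<Prod>y\<in>UNIV-{0}. x * y) = (\<Prod>y\<in>UNIV-{0}. y)"
    by (rule prod.reindex_bij_witness[of _ "\<lambda>y. y / x" "\<lambda>y. x * y"]) (use False in auto)
  finally show ?thesis
    by simp
qed (use finite_UNIV_card_ge_0[where ?'a = 'a] in auto)

lemma two_le_card_field: "2 \<le> card (UNIV :: 'a::{finite,field} set)"
proof -
  have "card {0::'a, 1} \<le> card (UNIV :: 'a set)"
    by (rule card_mono) auto
  then show ?thesis
    by simp
qed

lemma two_le_of_card_eq_power:
  assumes "card (UNIV :: 'a::{finite,field} set) = q ^ n"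
  shows "2 \<le> q"
proof -
  have "2 \<le> q ^ n"
    using two_le_card_field[where 'a = 'a] assms by simp
  moreover have "q ^ n \<le> 1" if "q < 2"
    using that by (cases "q = 0") (auto simp: power_0_left less_2_cases_iff)
  ultimately show ?thesis
    by linarith
qed

lemma card_roots_power_le:
  fixes c :: "'a::field"
  assumes "1 \<le> n"
  shows "card {x. x ^ n = c} \<le> n"
proof -
  define p where "p = monom (1::'a) n + [:-c:]"
  have deg: "degree p = n"
    unfolding p_def using assms by (subst degree_add_eq_left) (auto simp: degree_monom_eq)
  have "{x. x ^ n = c} = {x. poly p x = 0}"
    unfolding p_def by (auto simp: poly_monom)
  then show ?thesis
    using card_poly_roots_bound[of p] deg assms by fastforce
qed

lemma nat_geometric_sum:
  fixes q :: nat
  assumes "1 \<le> q"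
  shows "(q - 1) * (\<Sum>i<n. q ^ i) = q ^ n - 1"
proof -
  have "int ((q - 1) * (\<Sum>i<n. q ^ i)) = int (q ^ n - 1)"
    using power_diff_1_eq[of "int q" n] assms by simp
  then show ?thesis
    by (simp only: of_nat_eq_iff)
qed

lemma hilbert90_finite_field:
  fixes r :: "'a::{finite,field}"
  assumes card: "card (UNIV :: 'a set) = q ^ n" and norm: "(\<Prod>i<n. r ^ q ^ i) = 1"
  shows "\<exists>d. d \<noteq> 0 \<and> d ^ q = r * d"
proof -
  have q: "2 \<le> q"
    by (rule two_le_of_card_eq_power[OF card])
  have "n \<noteq> 0"
    using two_le_card_field[where 'a = 'a] card by (cases n) auto
  define M where "M = (\<Sum>i<n. q ^ i)"
  have "q ^ 0 \<le> M"
    unfolding M_def using \<open>n \<noteq> 0\<close> by (intro member_le_sum) auto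
  then have M_ge_1: "1 \<le> M"
    by simp
  have geometric: "(q - 1) * M = q ^ n - 1"
    unfolding M_def using q by (intro nat_geometric_sum) simp
  have card_units: "card (UNIV - {0::'a}) = (q - 1) * M"
    unfolding geometric using card by (simp add: card_Diff_subset)
  \<comment> \<open>d \<mapsto> d^(q-1) has fibres of size at most q - 1, so it maps the (q - 1) M units onto
    the at most M roots of x^M = 1, among which is r.\<close>
  define roots where "roots = {x::'a. x ^ M = 1}"
  define f where "f d = d ^ (q - 1)" for d :: 'a
  have image_sub: "f ` (UNIV - {0}) \<subseteq> roots"
  proof
    fix y assume "y \<in> f ` (UNIV - {0})"
    then obtain d where d: "d \<noteq> 0" "y = d ^ (q - 1)"
      unfolding f_def by auto
    have "d * d ^ (q ^ n - 1) = d * 1"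
      using finite_field_pow_card[of d] card q by (simp flip: power_Suc)
    then have "d ^ ((q - 1) * M) = 1"
      using d(1) unfolding geometric by simp
    then show "y \<in> roots"
      unfolding roots_def d(2) by (simp add: power_mult)
  qed
  have "(q - 1) * M \<le> card (\<Union>y\<in>f ` (UNIV - {0}). {d. d ^ (q - 1) = y})"
    unfolding card_units[symmetric] f_def by (intro card_mono) auto
  also have "\<dots> \<le> (\<Sum>y\<in>f ` (UNIV - {0}). card {d. d ^ (q - 1) = y})"
    by (rule card_UN_le) auto
  also have "\<dots> \<le> (\<Sum>y\<in>f ` (UNIV - {0}). q - 1)"
    by (intro sum_mono card_roots_power_le) (use q in auto)
  finally have "M \<le> card (f ` (UNIV - {0}))"
    using q by (simp add: mult.commute)
  moreover have "card roots \<le> M"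
    unfolding roots_def by (rule card_roots_power_le[OF M_ge_1])
  ultimately have "f ` (UNIV - {0}) = roots"
    using image_sub card_mono[OF finite image_sub] by (intro card_subset_eq) auto
  moreover have "r \<in> roots"
    using norm unfolding roots_def M_def by (simp add: power_sum)
  ultimately obtain d where "d \<noteq> 0" "r = d ^ (q - 1)"
    unfolding f_def by auto
  moreover have "d ^ q = d ^ (q - 1) * d"
    using q by (simp flip: power_Suc2)
  ultimately show ?thesis
    by auto
qed

section \<open>Dickson matrices\<close>

lemma pow_pow_mod:
  fixes x :: "'a::monoid_mult"
  assumes "x ^ q ^ n = x"
  shows "x ^ q ^ m = x ^ q ^ (m mod n)"
proof -
  have periodic: "x ^ q ^ (n * k) = x" for k
    by (induction k) (simp_all add: power_add power_mult assms)
  have "x ^ q ^ m = x ^ (q ^ (n * (m div n)) * q ^ (m mod n))"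
    by (simp flip: power_add)
  also have "\<dots> = (x ^ q ^ (n * (m div n))) ^ q ^ (m mod n)"
    by (rule power_mult)
  also have "\<dots> = x ^ q ^ (m mod n)"
    by (simp only: periodic)
  finally show ?thesis .
qed

lemma dickson_mat_index:
  "i < n \<Longrightarrow> j < n \<Longrightarrow> dickson_mat q n a $$ (i, j) = a ((j + n - i) mod n) ^ q ^ i"
  by (simp add: dickson_mat_def)

lemma dickson_mat_carrier [simp]: "dickson_mat q n a \<in> carrier_mat n n"
  and dim_dickson_mat [simp]: "dim_row (dickson_mat q n a) = n" "dim_col (dickson_mat q n a) = n"
  by (simp_all add: dickson_mat_def)

lemma cyclic_index_add:
  fixes i j n :: nat
  assumes "i < n" "j < n"
  shows "((j + n - i) mod n + i) mod n = j"
  using assms by (simp add: mod_add_left_eq)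

lemma cyclic_index_neg:
  fixes i j n :: nat
  assumes "i < n" "j < n"
  shows "(n - (j + n - i) mod n) mod n = (i + n - j) mod n"
  using assms by (cases "i \<le> j") (auto simp: mod_if)

lemma transpose_dickson_mat:
  fixes a :: "nat \<Rightarrow> 'a::field"
  assumes period: "\<And>x::'a. x ^ q ^ n = x"
  shows "transpose_mat (dickson_mat q n a) = dickson_mat q n (\<lambda>k. a ((n - k) mod n) ^ q ^ k)"
proof (rule eq_matI)
  fix i j assume "i < dim_row (dickson_mat q n (\<lambda>k. a ((n - k) mod n) ^ q ^ k))"
    "j < dim_col (dickson_mat q n (\<lambda>k. a ((n - k) mod n) ^ q ^ k))"
  then have ij: "i < n" "j < n"
    by (simp_all add: dickson_mat_def)
  define k where "k = (j + n - i) mod n"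
  have "(a ((n - k) mod n) ^ q ^ k) ^ q ^ i = a ((i + n - j) mod n) ^ q ^ (k + i)"
    unfolding k_def cyclic_index_neg[OF ij] by (simp add: power_add flip: power_mult)
  also have "\<dots> = a ((i + n - j) mod n) ^ q ^ j"
    by (subst pow_pow_mod[OF period]) (simp add: k_def cyclic_index_add[OF ij])
  finally show "transpose_mat (dickson_mat q n a) $$ (i, j)
      = dickson_mat q n (\<lambda>k. a ((n - k) mod n) ^ q ^ k) $$ (i, j)"
    using ij by (simp add: dickson_mat_index k_def)
qed (simp_all add: dickson_mat_def)

lemma diag_similar_dickson_matI:
  fixes a b :: "nat \<Rightarrow> 'a::field"
  assumes period: "\<And>x::'a. x ^ q ^ n = x" and "d \<noteq> 0"
    and b: "\<And>k. k < n \<Longrightarrow> b k = a k * d ^ q ^ k / d"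
  shows "diag_similar n (dickson_mat q n b) (dickson_mat q n a)"
proof -
  define D where "D = mat_diag n (\<lambda>i. d ^ q ^ i)"
  define Di where "Di = mat_diag n (\<lambda>i. inverse (d ^ q ^ i))"
  have "dickson_mat q n b = Di * dickson_mat q n a * D"
  proof (rule eq_matI)
    fix i j assume "i < dim_row (Di * dickson_mat q n a * D)" "j < dim_col (Di * dickson_mat q n a * D)"
    then have ij: "i < n" "j < n"
      by (simp_all add: D_def Di_def mat_diag_def)
    define k where "k = (j + n - i) mod n"
    have "k < n"
      using ij by (simp add: k_def)
    have "b k ^ q ^ i = a k ^ q ^ i * d ^ q ^ (k + i) / d ^ q ^ i"
      using b[OF \<open>k < n\<close>] by (simp add: power_mult_distrib power_divide power_add flip: power_mult)
    also have "d ^ q ^ (k + i) = d ^ q ^ j"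
      by (subst pow_pow_mod[OF period]) (simp add: k_def cyclic_index_add[OF ij])
    finally have "b k ^ q ^ i = inverse (d ^ q ^ i) * a k ^ q ^ i * d ^ q ^ j"
      by (simp add: field_simps)
    then show "dickson_mat q n b $$ (i, j) = (Di * dickson_mat q n a * D) $$ (i, j)"
      using ij unfolding D_def Di_def
      by (simp add: mat_diag_mult_left[of _ n n] mat_diag_mult_right[of _ n] dickson_mat_index k_def)
  qed (simp_all add: D_def Di_def mat_diag_def)
  moreover have "inverts_mat D Di" "inverts_mat Di D"
    using \<open>d \<noteq> 0\<close> by (simp_all add: D_def Di_def inverts_mat_def carrier_matD[OF mat_diag_dim])
  moreover have "diagonal_mat D"
    by (simp add: D_def diagonal_mat_def mat_diag_def)
  ultimately show ?thesis
    unfolding diag_similar_def by (intro exI[of _ D] exI[of _ Di]) (simp add: D_def Di_def)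
qed

section \<open>Principal minors of 4 \<times> 4 matrices\<close>

lemma det_dim1:
  fixes A :: "'a::comm_ring_1 mat"
  assumes "A \<in> carrier_mat 1 1"
  shows "det A = A $$ (0,0)"
proof -
  have "det A = (\<Sum>j<1. A $$ (0,j) * cofactor A 0 j)"
    by (rule laplace_expansion_row[OF assms]) auto
  also have "\<dots> = A $$ (0,0)"
    unfolding cofactor_def using mat_delete_carrier[OF assms, of 0 0] by simp
  finally show ?thesis .
qed

lemma det_dim2:
  fixes A :: "'a::comm_ring_1 mat"
  assumes "A \<in> carrier_mat 2 2"
  shows "det A = A $$ (0,0) * A $$ (1,1) - A $$ (0,1) * A $$ (1,0)"
proof -
  have "det A = (\<Sum>j<2. A $$ (0,j) * cofactor A 0 j)"
    by (rule laplace_expansion_row[OF assms]) auto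
  also have "\<dots> = A $$ (0,0) * A $$ (1,1) - A $$ (0,1) * A $$ (1,0)"
    unfolding cofactor_def
    using mat_delete_carrier[OF assms, of 0 0] mat_delete_carrier[OF assms, of 0 1] assms
    by (simp add: numeral_2_eq_2 det_dim1 mat_delete_def)
  finally show ?thesis .
qed

lemma det_dim3:
  fixes A :: "'a::comm_ring_1 mat"
  assumes "A \<in> carrier_mat 3 3"
  shows "det A = A $$ (0,0) * (A $$ (1,1) * A $$ (2,2) - A $$ (1,2) * A $$ (2,1))
   - A $$ (0,1) * (A $$ (1,0) * A $$ (2,2) - A $$ (1,2) * A $$ (2,0))
   + A $$ (0,2) * (A $$ (1,0) * A $$ (2,1) - A $$ (1,1) * A $$ (2,0))"
proof -
  have "det A = (\<Sum>j<3. A $$ (0,j) * cofactor A 0 j)"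
    by (rule laplace_expansion_row[OF assms]) auto
  also have "\<dots> = A $$ (0,0) * (A $$ (1,1) * A $$ (2,2) - A $$ (1,2) * A $$ (2,1))
   - A $$ (0,1) * (A $$ (1,0) * A $$ (2,2) - A $$ (1,2) * A $$ (2,0))
   + A $$ (0,2) * (A $$ (1,0) * A $$ (2,1) - A $$ (1,1) * A $$ (2,0))"
    unfolding cofactor_def
    using mat_delete_carrier[OF assms, of 0 0] mat_delete_carrier[OF assms, of 0 1]
      mat_delete_carrier[OF assms, of 0 2] assms
    by (simp add: eval_nat_numeral det_dim2 mat_delete_def) (simp add: algebra_simps)
  finally show ?thesis .
qed

lemma det_dim4:
  fixes A :: "'a::comm_ring_1 mat"
  assumes "A \<in> carrier_mat 4 4"
  shows "det A =
    A $$ (0,0) * (A $$ (1,1) * (A $$ (2,2) * A $$ (3,3) - A $$ (2,3) * A $$ (3,2))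
   - A $$ (1,2) * (A $$ (2,1) * A $$ (3,3) - A $$ (2,3) * A $$ (3,1))
   + A $$ (1,3) * (A $$ (2,1) * A $$ (3,2) - A $$ (2,2) * A $$ (3,1)))
  - A $$ (0,1) * (A $$ (1,0) * (A $$ (2,2) * A $$ (3,3) - A $$ (2,3) * A $$ (3,2))
   - A $$ (1,2) * (A $$ (2,0) * A $$ (3,3) - A $$ (2,3) * A $$ (3,0))
   + A $$ (1,3) * (A $$ (2,0) * A $$ (3,2) - A $$ (2,2) * A $$ (3,0)))
  + A $$ (0,2) * (A $$ (1,0) * (A $$ (2,1) * A $$ (3,3) - A $$ (2,3) * A $$ (3,1))
   - A $$ (1,1) * (A $$ (2,0) * A $$ (3,3) - A $$ (2,3) * A $$ (3,0))
   + A $$ (1,3) * (A $$ (2,0) * A $$ (3,1) - A $$ (2,1) * A $$ (3,0)))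
  - A $$ (0,3) * (A $$ (1,0) * (A $$ (2,1) * A $$ (3,2) - A $$ (2,2) * A $$ (3,1))
   - A $$ (1,1) * (A $$ (2,0) * A $$ (3,2) - A $$ (2,2) * A $$ (3,0))
   + A $$ (1,2) * (A $$ (2,0) * A $$ (3,1) - A $$ (2,1) * A $$ (3,0)))"
proof -
  have "det A = (\<Sum>j<4. A $$ (0,j) * cofactor A 0 j)"
    by (rule laplace_expansion_row[OF assms]) auto
  then show ?thesis
    unfolding cofactor_def
    using mat_delete_carrier[OF assms, of 0 0] mat_delete_carrier[OF assms, of 0 1]
      mat_delete_carrier[OF assms, of 0 2] mat_delete_carrier[OF assms, of 0 3] assms
    by (simp add: eval_nat_numeral det_dim3 mat_delete_def) (simp add: algebra_simps)
qed

lemma pick_eqI: "i \<in> I \<Longrightarrow> {a\<in>I. a < i} = S \<Longrightarrow> card S = k \<Longrightarrow> pick I k = i"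
  using pick_card_in_set by blast

lemma submatrix_principal:
  assumes "M \<in> carrier_mat n n" "I \<subseteq> {0..<n}"
  shows "submatrix M I I = mat (card I) (card I) (\<lambda>(i, j). M $$ (pick I i, pick I j))"
proof -
  have "{i. i < n \<and> i \<in> I} = I"
    using assms(2) by auto
  then show ?thesis
    using assms(1) by (simp add: submatrix_def)
qed

lemma submatrix_full:
  assumes "M \<in> carrier_mat n n"
  shows "submatrix M {0..<n} {0..<n} = M"
proof -
  have "pick {0..<n} i = i" if "i < n" for i
    using that by (intro pick_eqI[where S = "{0..<i}"]) auto
  then show ?thesis
    using assms by (auto simp: submatrix_principal intro!: eq_matI)
qed

lemma principal_minors_dim4:
  fixes M :: "'a::comm_ring_1 mat"
  assumes M: "M \<in> carrier_mat 4 4"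
  shows "det (submatrix M {0} {0}) = M $$ (0,0)"
    and "det (submatrix M {0,1} {0,1}) = M $$ (0,0) * M $$ (1,1) - M $$ (0,1) * M $$ (1,0)"
    and "det (submatrix M {0,2} {0,2}) = M $$ (0,0) * M $$ (2,2) - M $$ (0,2) * M $$ (2,0)"
    and "det (submatrix M {0,1,2} {0,1,2}) =
        M $$ (0,0) * (M $$ (1,1) * M $$ (2,2) - M $$ (1,2) * M $$ (2,1))
      - M $$ (0,1) * (M $$ (1,0) * M $$ (2,2) - M $$ (1,2) * M $$ (2,0))
      + M $$ (0,2) * (M $$ (1,0) * M $$ (2,1) - M $$ (1,1) * M $$ (2,0))"
proof -
  \<comment> \<open>The simplifier turns the index 1 into Suc 0, hence picks[unfolded One_nat_def] below.\<close>
  have picks: "pick {0} 0 = 0" "pick {0,1} 0 = 0" "pick {0,1} 1 = 1"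
    "pick {0,2} 0 = 0" "pick {0,2} 1 = 2"
    "pick {0,1,2} 0 = 0" "pick {0,1,2} 1 = 1" "pick {0,1,2} 2 = 2"
    by (rule pick_eqI[where S = "{}"] pick_eqI[where S = "{0}"] pick_eqI[where S = "{0,1}"]; auto)+
  note sub = submatrix_principal[OF M]
  have minor: "det (submatrix M I I) = det (mat k k (\<lambda>(i, j). M $$ (pick I i, pick I j)))"
    if "I \<subseteq> {0..<4}" "card I = k" for I k
    using sub[OF that(1)] that(2) by simp
  show "det (submatrix M {0} {0}) = M $$ (0,0)"
    by (subst minor[where k = 1]) (simp_all add: det_dim1 picks[unfolded One_nat_def] del: pick.simps)
  show "det (submatrix M {0,1} {0,1}) = M $$ (0,0) * M $$ (1,1) - M $$ (0,1) * M $$ (1,0)"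
    by (subst minor[where k = 2]) (simp_all add: det_dim2 picks[unfolded One_nat_def] del: pick.simps)
  show "det (submatrix M {0,2} {0,2}) = M $$ (0,0) * M $$ (2,2) - M $$ (0,2) * M $$ (2,0)"
    by (subst minor[where k = 2]) (simp_all add: det_dim2 picks[unfolded One_nat_def] del: pick.simps)
  show "det (submatrix M {0,1,2} {0,1,2}) =
        M $$ (0,0) * (M $$ (1,1) * M $$ (2,2) - M $$ (1,2) * M $$ (2,1))
      - M $$ (0,1) * (M $$ (1,0) * M $$ (2,2) - M $$ (1,2) * M $$ (2,0))
      + M $$ (0,2) * (M $$ (1,0) * M $$ (2,1) - M $$ (1,1) * M $$ (2,0))"
    by (subst minor[where k = 3]) (simp_all add: det_dim3 picks[unfolded One_nat_def] del: pick.simps)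
qed

section \<open>Multiplicative maps of period four\<close>

lemma same_sum_prod_cases:
  fixes x y z w :: "'a::idom"
  assumes "x + y = z + w" "x * y = z * w"
  shows "z = x \<or> z = y"
proof -
  have "(z - x) * (z - y) = z * z - z * (x + y) + x * y"
    by (simp add: algebra_simps)
  also have "\<dots> = 0"
    using assms by (simp add: algebra_simps)
  finally show ?thesis
    by simp
qed

text \<open>\<sigma> abstracts the Frobenius map x \<mapsto> x ^ q of the field with q^4 elements; the algebra
  below only uses that it is multiplicative and that \<sigma>^4 is the identity.\<close>

locale period4_mult_hom =
  fixes \<sigma> :: "'a::field \<Rightarrow> 'a"
  assumes mult: "\<sigma> (x * y) = \<sigma> x * \<sigma> y"
    and period: "\<sigma> (\<sigma> (\<sigma> (\<sigma> x))) = x"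
    and one: "\<sigma> 1 = 1"
    and zero: "\<sigma> 0 = 0"
begin

lemma eq_0_iff [simp]: "\<sigma> x = 0 \<longleftrightarrow> x = 0"
  by (metis period zero)

lemma inverse: "\<sigma> (inverse x) = inverse (\<sigma> x)"
proof (cases "x = 0")
  case False
  then have "\<sigma> x * \<sigma> (inverse x) = 1"
    by (metis mult one right_inverse)
  then show ?thesis
    by (metis inverse_unique)
qed (simp add: zero)

lemma divide: "\<sigma> (x / y) = \<sigma> x / \<sigma> y"
  by (simp add: divide_inverse mult inverse)

definition N :: "'a \<Rightarrow> 'a" where
  "N x = x * \<sigma> x * \<sigma> (\<sigma> x) * \<sigma> (\<sigma> (\<sigma> x))"

lemma N_mult: "N (x * y) = N x * N y"
  unfolding N_def mult by (simp add: ac_simps)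

lemma N_divide: "N (x / y) = N x / N y"
  unfolding N_def divide by (simp add: field_simps)

lemma N_\<sigma>: "N (\<sigma> x) = N x"
  unfolding N_def period by (simp add: ac_simps)

lemma N_eq_0_iff [simp]: "N x = 0 \<longleftrightarrow> x = 0"
  unfolding N_def by simp

text \<open>If \<sigma> d = r d, conjugating a Dickson matrix by diag(d, \<sigma> d, \<sigma>^2 d, \<sigma>^3 d) replaces
  a_k by a_k \<sigma>^k(d) / d = a_k r \<sigma>(r) ... \<sigma>^(k-1)(r); by Hilbert 90 such d exists iff
  N r = 1.\<close>

definition twist :: "'a \<Rightarrow> 'a \<Rightarrow> 'a \<Rightarrow> 'a \<Rightarrow> 'a \<Rightarrow> 'a \<Rightarrow> bool" where
  "twist a1 a2 a3 b1 b2 b3 \<longleftrightarrow>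
     (\<exists>r. N r = 1 \<and> b1 = a1 * r \<and> b2 = a2 * (r * \<sigma> r) \<and> b3 = a3 * (r * \<sigma> r * \<sigma> (\<sigma> r)))"

lemma twistI:
  assumes "N r = 1" "b1 = a1 * r" "b2 = a2 * (r * \<sigma> r)" "\<sigma> a3 = r * \<sigma> b3"
  shows "twist a1 a2 a3 b1 b2 b3"
proof -
  have "a3 = \<sigma> (\<sigma> (\<sigma> r)) * b3"
    using arg_cong[OF assms(4), of "\<lambda>x. \<sigma> (\<sigma> (\<sigma> x))"] by (simp add: mult period)
  then have "a3 * (r * \<sigma> r * \<sigma> (\<sigma> r)) = b3 * N r"
    by (simp add: N_def ac_simps)
  then show ?thesis
    using assms unfolding twist_def by auto
qed

lemma twist_of_first_eq:
  assumes "a1 \<noteq> 0" "a2 \<noteq> 0"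
    and H1: "a1 * \<sigma> a3 = b1 * \<sigma> b3" and H2: "a2 * \<sigma> (\<sigma> a2) = b2 * \<sigma> (\<sigma> b2)"
    and first: "b1 * \<sigma> b1 * \<sigma> (\<sigma> b2) = a1 * \<sigma> a1 * \<sigma> (\<sigma> a2)"
  shows "twist a1 a2 a3 b1 b2 b3"
proof -
  define r where "r = b1 / a1"
  define e where "e = b2 / a2"
  have b1: "b1 = a1 * r" and b2: "b2 = a2 * e"
    using assms(1,2) by (simp_all add: r_def e_def)
  have "a1 * \<sigma> a1 * \<sigma> (\<sigma> a2) * (r * \<sigma> r * \<sigma> (\<sigma> e)) = a1 * \<sigma> a1 * \<sigma> (\<sigma> a2) * 1"
    using first unfolding b1 b2 mult by (simp add: ac_simps)
  then have re: "r * \<sigma> r * \<sigma> (\<sigma> e) = 1"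
    using assms(1,2) by simp
  have "a2 * \<sigma> (\<sigma> a2) * (e * \<sigma> (\<sigma> e)) = a2 * \<sigma> (\<sigma> a2) * 1"
    using H2 unfolding b2 mult by (simp add: ac_simps)
  then have ee: "e * \<sigma> (\<sigma> e) = 1"
    using assms(2) by simp
  have "e = e * (r * \<sigma> r * \<sigma> (\<sigma> e))"
    by (simp add: re)
  also have "\<dots> = r * \<sigma> r * (e * \<sigma> (\<sigma> e))"
    by (simp add: ac_simps)
  finally have e: "e = r * \<sigma> r"
    by (simp add: ee)
  have "N r = 1"
    using ee unfolding e N_def mult by (simp add: ac_simps)
  moreover have "\<sigma> a3 = r * \<sigma> b3"
    using H1 assms(1) unfolding b1 by (simp add: ac_simps)
  ultimately show ?thesis
    using b1 b2 e by (intro twistI) auto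
qed

lemma twist_of_last_eq:
  assumes "a3 \<noteq> 0" "a2 \<noteq> 0"
    and H1: "a1 * \<sigma> a3 = b1 * \<sigma> b3" and H2: "a2 * \<sigma> (\<sigma> a2) = b2 * \<sigma> (\<sigma> b2)"
    and last: "b2 * \<sigma> b3 * \<sigma> (\<sigma> b3) = a2 * \<sigma> a3 * \<sigma> (\<sigma> a3)"
  shows "twist a1 a2 a3 b1 b2 b3"
proof -
  have "b3 \<noteq> 0"
    using last assms(1,2) by (auto simp: zero)
  define r where "r = \<sigma> a3 / \<sigma> b3"
  define e where "e = b2 / a2"
  have a3: "\<sigma> a3 = r * \<sigma> b3" and b2: "b2 = a2 * e"
    using \<open>b3 \<noteq> 0\<close> assms(2) by (simp_all add: r_def e_def)
  have "a2 * \<sigma> b3 * \<sigma> (\<sigma> b3) * e = a2 * \<sigma> b3 * \<sigma> (\<sigma> b3) * (r * \<sigma> r)"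
    using last unfolding b2 a3 mult by (simp add: ac_simps)
  then have e: "e = r * \<sigma> r"
    using assms(2) \<open>b3 \<noteq> 0\<close> by simp
  have "a2 * \<sigma> (\<sigma> a2) * (e * \<sigma> (\<sigma> e)) = a2 * \<sigma> (\<sigma> a2) * 1"
    using H2 unfolding b2 mult by (simp add: ac_simps)
  then have "N r = 1"
    using assms(2) unfolding e N_def mult by (simp add: ac_simps)
  moreover have "b1 = a1 * r"
    using H1 \<open>b3 \<noteq> 0\<close> unfolding a3 by (simp add: ac_simps)
  ultimately show ?thesis
    using b2 e a3 by (intro twistI) auto
qed

lemma twist_of_first_norm_eq:
  assumes "a1 \<noteq> 0" "a2 = 0" "b2 = 0"
    and H1: "a1 * \<sigma> a3 = b1 * \<sigma> b3" and "N b1 = N a1"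
  shows "twist a1 a2 a3 b1 b2 b3"
proof (rule twistI)
  define r where "r = b1 / a1"
  show "N r = 1" "b1 = a1 * r"
    using assms(1,5) by (simp_all add: r_def N_divide)
  show "b2 = a2 * (r * \<sigma> r)"
    using assms(2,3) by simp
  show "\<sigma> a3 = r * \<sigma> b3"
    using H1 assms(1) by (simp add: r_def field_simps)
qed

lemma twist_of_last_norm_eq:
  assumes "a3 \<noteq> 0" "a2 = 0" "b2 = 0"
    and H1: "a1 * \<sigma> a3 = b1 * \<sigma> b3" and "N b3 = N a3"
  shows "twist a1 a2 a3 b1 b2 b3"
proof (rule twistI)
  have "b3 \<noteq> 0"
    using assms(1,5) by (metis N_eq_0_iff)
  define r where "r = \<sigma> a3 / \<sigma> b3"
  show "N r = 1" "\<sigma> a3 = r * \<sigma> b3"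
    using assms(1,5) \<open>b3 \<noteq> 0\<close> by (simp_all add: r_def N_divide N_\<sigma>)
  show "b1 = a1 * r"
    using H1 \<open>b3 \<noteq> 0\<close> by (simp add: r_def field_simps)
  show "b2 = a2 * (r * \<sigma> r)"
    using assms(2,3) by simp
qed

lemma twist_of_head_eq:
  assumes nz: "a1 \<noteq> 0 \<or> a3 \<noteq> 0" and "a2 \<noteq> 0"
    and H1: "a1 * \<sigma> a3 = b1 * \<sigma> b3" and H2: "a2 * \<sigma> (\<sigma> a2) = b2 * \<sigma> (\<sigma> b2)"
    and H3: "a1 * \<sigma> a1 * \<sigma> (\<sigma> a2) + a2 * \<sigma> a3 * \<sigma> (\<sigma> a3)
      = b1 * \<sigma> b1 * \<sigma> (\<sigma> b2) + b2 * \<sigma> b3 * \<sigma> (\<sigma> b3)"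
    and head: "b1 * \<sigma> b1 * \<sigma> (\<sigma> b2) = a1 * \<sigma> a1 * \<sigma> (\<sigma> a2)"
  shows "twist a1 a2 a3 b1 b2 b3"
proof (cases "a1 = 0")
  case True
  then have "b2 * \<sigma> b3 * \<sigma> (\<sigma> b3) = a2 * \<sigma> a3 * \<sigma> (\<sigma> a3)"
    using H3 head by simp
  then show ?thesis
    using True nz \<open>a2 \<noteq> 0\<close> H1 H2 by (auto intro: twist_of_last_eq)
qed (use assms twist_of_first_eq in blast)

lemma twist_of_head_norm_eq:
  assumes nz: "a1 \<noteq> 0 \<or> a3 \<noteq> 0" and "a2 = 0" "b2 = 0"
    and H1: "a1 * \<sigma> a3 = b1 * \<sigma> b3" and H4: "N a1 + N a3 = N b1 + N b3"
    and head: "N b1 = N a1"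
  shows "twist a1 a2 a3 b1 b2 b3"
proof (cases "a1 = 0")
  case True
  then have "N b3 = N a3"
    using H4 head by simp
  then show ?thesis
    using True nz assms(2,3) H1 by (auto intro: twist_of_last_norm_eq)
qed (use assms twist_of_first_norm_eq in blast)

lemma twist_or_twist_transposed_of_coeff2_ne_0:
  assumes nz: "a1 \<noteq> 0 \<or> a3 \<noteq> 0" and "a2 \<noteq> 0"
    and H1: "a1 * \<sigma> a3 = b1 * \<sigma> b3" and H2: "a2 * \<sigma> (\<sigma> a2) = b2 * \<sigma> (\<sigma> b2)"
    and H3: "a1 * \<sigma> a1 * \<sigma> (\<sigma> a2) + a2 * \<sigma> a3 * \<sigma> (\<sigma> a3)
      = b1 * \<sigma> b1 * \<sigma> (\<sigma> b2) + b2 * \<sigma> b3 * \<sigma> (\<sigma> b3)"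
  shows "twist a1 a2 a3 b1 b2 b3 \<or> twist (\<sigma> a3) (\<sigma> (\<sigma> a2)) (\<sigma> (\<sigma> (\<sigma> a1))) b1 b2 b3"
proof -
  have "(a1 * \<sigma> a1 * \<sigma> (\<sigma> a2)) * (a2 * \<sigma> a3 * \<sigma> (\<sigma> a3))
      = (a1 * \<sigma> a3) * \<sigma> (a1 * \<sigma> a3) * (a2 * \<sigma> (\<sigma> a2))"
    by (simp add: mult ac_simps)
  also have "\<dots> = (b1 * \<sigma> b1 * \<sigma> (\<sigma> b2)) * (b2 * \<sigma> b3 * \<sigma> (\<sigma> b3))"
    unfolding H1 H2 by (simp add: mult ac_simps)
  finally consider
      "b1 * \<sigma> b1 * \<sigma> (\<sigma> b2) = a1 * \<sigma> a1 * \<sigma> (\<sigma> a2)"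
    | "b1 * \<sigma> b1 * \<sigma> (\<sigma> b2) = \<sigma> a3 * \<sigma> (\<sigma> a3) * \<sigma> (\<sigma> (\<sigma> (\<sigma> a2)))"
    using same_sum_prod_cases[OF H3] by (auto simp: period ac_simps)
  then show ?thesis
  proof cases
    case 1
    then show ?thesis
      using twist_of_head_eq[OF nz \<open>a2 \<noteq> 0\<close> H1 H2 H3] by blast
  next
    \<comment> \<open>(\<sigma> a3, \<sigma>^2 a2, \<sigma>^3 a1) are the coefficients of the transposed matrix, and the
      hypotheses are invariant under passing to them.\<close>
    case 2
    moreover have "\<sigma> a3 \<noteq> 0 \<or> \<sigma> (\<sigma> (\<sigma> a1)) \<noteq> 0" "\<sigma> (\<sigma> a2) \<noteq> 0"
      using nz \<open>a2 \<noteq> 0\<close> by auto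
    moreover have "\<sigma> a3 * \<sigma> (\<sigma> (\<sigma> (\<sigma> a1))) = b1 * \<sigma> b3"
      "\<sigma> (\<sigma> a2) * \<sigma> (\<sigma> (\<sigma> (\<sigma> a2))) = b2 * \<sigma> (\<sigma> b2)"
      "\<sigma> a3 * \<sigma> (\<sigma> a3) * \<sigma> (\<sigma> (\<sigma> (\<sigma> a2)))
        + \<sigma> (\<sigma> a2) * \<sigma> (\<sigma> (\<sigma> (\<sigma> a1))) * \<sigma> (\<sigma> (\<sigma> (\<sigma> (\<sigma> a1))))
      = b1 * \<sigma> b1 * \<sigma> (\<sigma> b2) + b2 * \<sigma> b3 * \<sigma> (\<sigma> b3)"
      using H1 H2 H3 by (simp_all add: period ac_simps)
    ultimately show ?thesis
      using twist_of_head_eq by blast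
  qed
qed

lemma twist_or_twist_transposed_of_coeff2_eq_0:
  assumes nz: "a1 \<noteq> 0 \<or> a3 \<noteq> 0" and "a2 = 0" "b2 = 0"
    and H1: "a1 * \<sigma> a3 = b1 * \<sigma> b3" and H4: "N a1 + N a3 = N b1 + N b3"
  shows "twist a1 a2 a3 b1 b2 b3 \<or> twist (\<sigma> a3) (\<sigma> (\<sigma> a2)) (\<sigma> (\<sigma> (\<sigma> a1))) b1 b2 b3"
proof -
  have "N a1 * N a3 = N b1 * N b3"
    by (metis H1 N_mult N_\<sigma>)
  then consider "N b1 = N a1" | "N b1 = N (\<sigma> a3)"
    using same_sum_prod_cases[OF H4] by (auto simp: N_\<sigma>)
  then show ?thesis
  proof cases
    case 1
    then show ?thesis
      using twist_of_head_norm_eq[OF nz assms(2,3) H1 H4] by blast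
  next
    case 2
    moreover have "\<sigma> a3 \<noteq> 0 \<or> \<sigma> (\<sigma> (\<sigma> a1)) \<noteq> 0" "\<sigma> (\<sigma> a2) = 0"
      using nz \<open>a2 = 0\<close> by (auto simp: zero)
    moreover have "\<sigma> a3 * \<sigma> (\<sigma> (\<sigma> (\<sigma> a1))) = b1 * \<sigma> b3"
      "N (\<sigma> a3) + N (\<sigma> (\<sigma> (\<sigma> a1))) = N b1 + N b3"
      using H1 H4 by (simp_all add: period N_\<sigma> ac_simps)
    ultimately show ?thesis
      using twist_of_head_norm_eq \<open>b2 = 0\<close> by blast
  qed
qed

lemma twist_or_twist_transposed:
  assumes nz: "a1 \<noteq> 0 \<or> a3 \<noteq> 0"
    and H1: "a1 * \<sigma> a3 = b1 * \<sigma> b3" and H2: "a2 * \<sigma> (\<sigma> a2) = b2 * \<sigma> (\<sigma> b2)"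
    and H3: "a1 * \<sigma> a1 * \<sigma> (\<sigma> a2) + a2 * \<sigma> a3 * \<sigma> (\<sigma> a3)
      = b1 * \<sigma> b1 * \<sigma> (\<sigma> b2) + b2 * \<sigma> b3 * \<sigma> (\<sigma> b3)"
    and H4: "a2 = 0 \<Longrightarrow> b2 = 0 \<Longrightarrow> N a1 + N a3 = N b1 + N b3"
  shows "twist a1 a2 a3 b1 b2 b3 \<or> twist (\<sigma> a3) (\<sigma> (\<sigma> a2)) (\<sigma> (\<sigma> (\<sigma> a1))) b1 b2 b3"
proof (cases "a2 = 0")
  case True
  then have "b2 = 0"
    using H2 by simp
  with True show ?thesis
    using twist_or_twist_transposed_of_coeff2_eq_0 nz H1 H4 by blast
qed (use twist_or_twist_transposed_of_coeff2_ne_0 assms in blast)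

lemma dickson_mat4_entries:
  assumes \<sigma>_def: "\<sigma> = (\<lambda>x. x ^ q)"
  shows "dickson_mat q 4 a $$ (0,0) = a 0" "dickson_mat q 4 a $$ (0,1) = a 1"
    "dickson_mat q 4 a $$ (0,2) = a 2" "dickson_mat q 4 a $$ (0,3) = a 3"
    "dickson_mat q 4 a $$ (1,0) = \<sigma> (a 3)" "dickson_mat q 4 a $$ (1,1) = \<sigma> (a 0)"
    "dickson_mat q 4 a $$ (1,2) = \<sigma> (a 1)" "dickson_mat q 4 a $$ (1,3) = \<sigma> (a 2)"
    "dickson_mat q 4 a $$ (2,0) = \<sigma> (\<sigma> (a 2))" "dickson_mat q 4 a $$ (2,1) = \<sigma> (\<sigma> (a 3))"
    "dickson_mat q 4 a $$ (2,2) = \<sigma> (\<sigma> (a 0))" "dickson_mat q 4 a $$ (2,3) = \<sigma> (\<sigma> (a 1))"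
    "dickson_mat q 4 a $$ (3,0) = \<sigma> (\<sigma> (\<sigma> (a 1)))" "dickson_mat q 4 a $$ (3,1) = \<sigma> (\<sigma> (\<sigma> (a 2)))"
    "dickson_mat q 4 a $$ (3,2) = \<sigma> (\<sigma> (\<sigma> (a 3)))" "dickson_mat q 4 a $$ (3,3) = \<sigma> (\<sigma> (\<sigma> (a 0)))"
  by (simp_all add: dickson_mat_index \<sigma>_def power2_eq_square power3_eq_cube power_mult)

lemma dickson_mat4_minor_012:
  assumes \<sigma>_def: "\<sigma> = (\<lambda>x. x ^ q)"
  shows "det (submatrix (dickson_mat q 4 a) {0,1,2} {0,1,2})
    = a 0 * \<sigma> (a 0) * \<sigma> (\<sigma> (a 0)) - a 0 * \<sigma> (a 1 * \<sigma> (a 3))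
      - \<sigma> (\<sigma> (a 0)) * (a 1 * \<sigma> (a 3)) - \<sigma> (a 0) * (a 2 * \<sigma> (\<sigma> (a 2)))
      + (a 1 * \<sigma> (a 1) * \<sigma> (\<sigma> (a 2)) + a 2 * \<sigma> (a 3) * \<sigma> (\<sigma> (a 3)))"
  unfolding principal_minors_dim4(4)[OF dickson_mat_carrier] dickson_mat4_entries[OF \<sigma>_def]
  by (simp add: mult algebra_simps)

lemma dickson_mat4_det_of_coeff2_0:
  assumes \<sigma>_def: "\<sigma> = (\<lambda>x. x ^ q)" and "a 2 = 0"
  defines "P \<equiv> a 1 * \<sigma> (a 3)"
  shows "det (dickson_mat q 4 a)
    = N (a 0) - (P * \<sigma> (\<sigma> (a 0)) * \<sigma> (\<sigma> (\<sigma> (a 0))) + \<sigma> P * a 0 * \<sigma> (\<sigma> (\<sigma> (a 0)))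
        + \<sigma> (\<sigma> P) * a 0 * \<sigma> (a 0) + \<sigma> (\<sigma> (\<sigma> P)) * \<sigma> (a 0) * \<sigma> (\<sigma> (a 0)))
      + P * \<sigma> (\<sigma> P) + \<sigma> P * \<sigma> (\<sigma> (\<sigma> P)) - (N (a 1) + N (a 3))"
  unfolding det_dim4[OF dickson_mat_carrier] dickson_mat4_entries[OF \<sigma>_def] \<open>a 2 = 0\<close> P_def N_def
  by (simp add: mult period zero algebra_simps)

lemma dickson_mat4_principal_minor_relations:
  assumes \<sigma>_def: "\<sigma> = (\<lambda>x. x ^ q)"
    and E: "equal_principal_minors 4 (dickson_mat q 4 a) (dickson_mat q 4 b)"
  shows "b 0 = a 0"
    and "a 1 * \<sigma> (a 3) = b 1 * \<sigma> (b 3)"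
    and "a 2 * \<sigma> (\<sigma> (a 2)) = b 2 * \<sigma> (\<sigma> (b 2))"
    and "a 1 * \<sigma> (a 1) * \<sigma> (\<sigma> (a 2)) + a 2 * \<sigma> (a 3) * \<sigma> (\<sigma> (a 3))
      = b 1 * \<sigma> (b 1) * \<sigma> (\<sigma> (b 2)) + b 2 * \<sigma> (b 3) * \<sigma> (\<sigma> (b 3))"
    and "a 2 = 0 \<Longrightarrow> b 2 = 0 \<Longrightarrow> N (a 1) + N (a 3) = N (b 1) + N (b 3)"
proof -
  let ?A = "dickson_mat q 4 a" and ?B = "dickson_mat q 4 b"
  have minor: "det (submatrix ?A I I) = det (submatrix ?B I I)" if "I \<subseteq> {0..<4}" "I \<noteq> {}" for I
    using E that unfolding equal_principal_minors_def by blast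
  note entries = dickson_mat4_entries[OF \<sigma>_def]
  note minors = principal_minors_dim4[OF dickson_mat_carrier]
  have "det (submatrix ?A {0} {0}) = det (submatrix ?B {0} {0})"
    by (rule minor) auto
  then show b0: "b 0 = a 0"
    unfolding minors entries by simp
  have "det (submatrix ?A {0,1} {0,1}) = det (submatrix ?B {0,1} {0,1})"
    by (rule minor) auto
  then show H1: "a 1 * \<sigma> (a 3) = b 1 * \<sigma> (b 3)"
    unfolding minors entries b0 by simp
  have "det (submatrix ?A {0,2} {0,2}) = det (submatrix ?B {0,2} {0,2})"
    by (rule minor) auto
  then show H2: "a 2 * \<sigma> (\<sigma> (a 2)) = b 2 * \<sigma> (\<sigma> (b 2))"
    unfolding minors entries b0 by simp
  have "det (submatrix ?A {0,1,2} {0,1,2}) = det (submatrix ?B {0,1,2} {0,1,2})"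
    by (rule minor) auto
  then show "a 1 * \<sigma> (a 1) * \<sigma> (\<sigma> (a 2)) + a 2 * \<sigma> (a 3) * \<sigma> (\<sigma> (a 3))
      = b 1 * \<sigma> (b 1) * \<sigma> (\<sigma> (b 2)) + b 2 * \<sigma> (b 3) * \<sigma> (\<sigma> (b 3))"
    unfolding dickson_mat4_minor_012[OF \<sigma>_def] b0 H1 H2 by simp
  assume "a 2 = 0" "b 2 = 0"
  have "det ?A = det ?B"
    using minor[of "{0..<4}"] by (simp add: submatrix_full)
  then have "- N (a 1) - N (a 3) = - N (b 1) - N (b 3)"
    unfolding dickson_mat4_det_of_coeff2_0[where a = a, OF \<sigma>_def \<open>a 2 = 0\<close>]
      dickson_mat4_det_of_coeff2_0[where a = b, OF \<sigma>_def \<open>b 2 = 0\<close>] b0 H1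
    by simp
  then show "N (a 1) + N (a 3) = N (b 1) + N (b 3)"
    by (simp add: algebra_simps)
qed

end

section \<open>Diagonal similarity of 4 \<times> 4 Dickson matrices\<close>

lemma period4_mult_hom_frobenius:
  assumes card: "card (UNIV :: 'a::{finite,field} set) = q ^ 4"
  shows "period4_mult_hom (\<lambda>x::'a. x ^ q)"
proof
  fix x y :: 'a
  show "(x * y) ^ q = x ^ q * y ^ q"
    by (rule power_mult_distrib)
  have "(((x ^ q) ^ q) ^ q) ^ q = x ^ q ^ 4"
    by (simp add: eval_nat_numeral mult.assoc flip: power_mult)
  then show "(((x ^ q) ^ q) ^ q) ^ q = x"
    using finite_field_pow_card[of x] card by simp
  show "(1::'a) ^ q = 1" "(0::'a) ^ q = 0"
    using two_le_of_card_eq_power[OF card] by simp_all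
qed

lemma irreducible_dickson_mat4_coeffs:
  assumes "q \<noteq> 0" and "irreducible_mat 4 (dickson_mat q 4 a)"
  shows "a 1 \<noteq> 0 \<or> a 3 \<noteq> 0"
proof (rule ccontr)
  assume "\<not> (a 1 \<noteq> 0 \<or> a 3 \<noteq> 0)"
  then have zero_block: "\<forall>i\<in>{0, 2::nat}. \<forall>j\<in>{1, 3}. dickson_mat q 4 a $$ (i, j) = 0"
    using \<open>q \<noteq> 0\<close> by (auto simp: dickson_mat_index)
  have "reducible_mat 4 (dickson_mat q 4 a)"
    unfolding reducible_mat_def using zero_block
    by (intro exI[of _ "{0, 2::nat}"] exI[of _ "{1, 3::nat}"]) auto
  then show False
    using assms(2) unfolding irreducible_mat_def by simp
qed

lemma diag_similar_dickson_mat4_of_twist: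
  fixes a b :: "nat \<Rightarrow> 'a::{finite,field}"
  assumes card: "card (UNIV :: 'a set) = q ^ 4"
    and twist: "period4_mult_hom.twist (\<lambda>x::'a. x ^ q) (a 1) (a 2) (a 3) (b 1) (b 2) (b 3)"
    and "b 0 = a 0"
  shows "diag_similar 4 (dickson_mat q 4 b) (dickson_mat q 4 a)"
proof -
  interpret period4_mult_hom "\<lambda>x::'a. x ^ q"
    by (rule period4_mult_hom_frobenius[OF card])
  obtain r where r: "N r = 1" "b 1 = a 1 * r"
    "b 2 = a 2 * (r * r ^ q)" "b 3 = a 3 * (r * r ^ q * (r ^ q) ^ q)"
    using twist unfolding twist_def by auto
  have "(\<Prod>i<4. r ^ q ^ i) = 1"
    using r(1) by (simp add: N_def eval_nat_numeral power_mult ac_simps)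
  then obtain d :: 'a where "d \<noteq> 0" and d: "d ^ q = r * d"
    using hilbert90_finite_field[OF card] by blast
  have "b k = a k * d ^ q ^ k / d" if "k < 4" for k
  proof -
    have "k = 0 \<or> k = 1 \<or> k = 2 \<or> k = 3"
      using that by auto
    moreover have "d ^ q ^ 2 = r * r ^ q * d" "d ^ q ^ 3 = r * r ^ q * (r ^ q) ^ q * d"
      by (simp_all add: eval_nat_numeral power_mult d power_mult_distrib ac_simps)
    ultimately show ?thesis
      using r \<open>b 0 = a 0\<close> \<open>d \<noteq> 0\<close> d by auto
  qed
  moreover have "x ^ q ^ 4 = x" for x :: 'a
    using finite_field_pow_card[of x] card by simp
  ultimately show ?thesis
    using \<open>d \<noteq> 0\<close> by (intro diag_similar_dickson_matI) auto
qed

lemma diag_similar_transpose_dickson_mat4_of_twist: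
  fixes a b :: "nat \<Rightarrow> 'a::{finite,field}"
  assumes card: "card (UNIV :: 'a set) = q ^ 4"
    and twist: "period4_mult_hom.twist (\<lambda>x::'a. x ^ q)
      (a 3 ^ q) ((a 2 ^ q) ^ q) (((a 1 ^ q) ^ q) ^ q) (b 1) (b 2) (b 3)"
    and "b 0 = a 0"
  shows "diag_similar 4 (dickson_mat q 4 b) (transpose_mat (dickson_mat q 4 a))"
proof -
  define a' where "a' k = a ((4 - k) mod 4) ^ q ^ k" for k
  have a': "a' 0 = a 0" "a' 1 = a 3 ^ q" "a' 2 = (a 2 ^ q) ^ q" "a' 3 = ((a 1 ^ q) ^ q) ^ q"
    by (simp_all add: a'_def power2_eq_square power3_eq_cube power_mult)
  have "transpose_mat (dickson_mat q 4 a) = dickson_mat q 4 a'"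
    unfolding a'_def using finite_field_pow_card[where 'a = 'a] card
    by (intro transpose_dickson_mat) simp
  moreover have "diag_similar 4 (dickson_mat q 4 b) (dickson_mat q 4 a')"
    using twist \<open>b 0 = a 0\<close>
    by (intro diag_similar_dickson_mat4_of_twist[OF card]) (simp_all only: a')
  ultimately show ?thesis
    by simp
qed

theorem mainTheorem11:
  fixes A B :: "'a::{finite,field} mat" and q :: nat
  assumes "card (UNIV :: 'a set) = q ^ 4"
    and "is_dickson_mat q 4 A" and "irreducible_mat 4 A"
    and "is_dickson_mat q 4 B"
    and "equal_principal_minors 4 A B"
  shows "diag_similar 4 B A \<or> diag_similar 4 B (transpose_mat A)"
proof -
  obtain a b where A: "A = dickson_mat q 4 a" and B: "B = dickson_mat q 4 b"
    using assms(2,4) unfolding is_dickson_mat_def by blast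
  interpret period4_mult_hom "\<lambda>x::'a. x ^ q"
    by (rule period4_mult_hom_frobenius[OF assms(1)])
  note relations = dickson_mat4_principal_minor_relations[OF refl assms(5)[unfolded A B]]
  have "q \<noteq> 0"
    using two_le_of_card_eq_power[OF assms(1)] by simp
  then have "a 1 \<noteq> 0 \<or> a 3 \<noteq> 0"
    using irreducible_dickson_mat4_coeffs assms(3) unfolding A by blast
  from twist_or_twist_transposed[OF this relations(2-5)] show ?thesis
    unfolding A B
    using diag_similar_dickson_mat4_of_twist[where a = a and b = b, OF assms(1) _ relations(1)]
      diag_similar_transpose_dickson_mat4_of_twist[where a = a and b = b, OF assms(1) _ relations(1)]
    by blast
qed

end
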